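(* For any integers $x,y\ge 3$ and integers $a\le x/2$, $b\le y/2$, except for the case $x=y=4$, $a=b=2$, we have \[\binom{x}{a}\binom{y}{b}\le\binom{x+y-1}{a+b}.\] *)

theory Defs
  imports Main
begin

end

theory Submission
  imports Defs Complex_Main
begin

text \<open>Vandermonde's identity writes \<open>(x + y - 1) choose (a + b)\<close> as the sum of the products
  \<open>(x choose k) * ((y - 1) choose (a + b - k))\<close>, so it suffices to dominate
  \<open>(x choose a) * (y choose b)\<close> by a few of these terms. If \<open>2 * a < x\<close>, Pascal's rule splits
  \<open>y choose b\<close> into \<open>(y - 1) choose b + (y - 1) choose (b - 1)\<close>, and as \<open>x choose a \<le> x choose (a + 1)\<close>
  the two products are dominated by the terms \<open>k = a\<close> and \<open>k = a + 1\<close>. By symmetry only the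
  central case \<open>x = 2 * a\<close>, \<open>y = 2 * b\<close> remains; there the terms \<open>k = a - 1, a, a + 1\<close> suffice,
  the estimate reducing to \<open>(a + 1) * (b + 1) \<le> 2 * a * b\<close>, which fails only for \<open>a = b = 2\<close>.\<close>

lemma add_less_mult_iff_nat:
  fixes a b :: nat
  shows "a + b < a * b \<longleftrightarrow> 2 \<le> a \<and> 2 \<le> b \<and> \<not> (a = 2 \<and> b = 2)"
proof
  assume "a + b < a * b"
  then show "2 \<le> a \<and> 2 \<le> b \<and> \<not> (a = 2 \<and> b = 2)"
    by (cases "a \<le> 1"; cases "b \<le> 1"; auto simp: le_Suc_eq)
next
  assume "2 \<le> a \<and> 2 \<le> b \<and> \<not> (a = 2 \<and> b = 2)"
  moreover obtain c d where "a = c + 2" "b = d + 2"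
    using calculation le_add_diff_inverse2 by metis
  ultimately show "a + b < a * b"
    by (auto simp: algebra_simps)
qed

lemma sum_choose_mult_le_choose_add:
  fixes m n r :: nat
  assumes "K \<subseteq> {..r}"
  shows "(\<Sum>k\<in>K. (m choose k) * (n choose (r - k))) \<le> (m + n) choose r"
proof -
  have "(\<Sum>k\<in>K. (m choose k) * (n choose (r - k))) \<le> (\<Sum>k\<le>r. (m choose k) * (n choose (r - k)))"
    using assms by (intro sum_mono2) auto
  also have "\<dots> = (m + n) choose r"
    by (rule vandermonde)
  finally show ?thesis .
qed

lemma choose_le_choose_Suc:
  fixes n k :: nat
  assumes "2 * k < n"
  shows "n choose k \<le> n choose Suc k"
proof (cases "2 * Suc k \<le> n")
  case True
  then show ?thesis by (intro binomial_mono) auto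
next
  case False
  with assms have "odd n" "n div 2 = k" by presburger+
  then show ?thesis using central_binomial_odd[of n] by simp
qed

lemma Suc_times_choose_Suc:
  fixes n k :: nat
  shows "Suc k * (n choose Suc k) = (n - k) * (n choose k)"
  using binomial_absorption[of k n] binomial_absorb_comp[of n k] by simp

lemma choose_mult_choose_le_choose_add_pred:
  fixes x y a b :: nat
  assumes "2 * a < x" and "0 < y"
  shows "(x choose a) * (y choose b) \<le> (x + y - 1) choose (a + b)"
proof (cases "b = 0")
  case True
  then show ?thesis using assms binomial_right_mono[of x "x + y - 1" a] by simp
next
  case False
  have "(x choose a) * (y choose b)
      = (x choose a) * ((y - 1) choose b) + (x choose a) * ((y - 1) choose (b - 1))"
    using assms False by (simp add: choose_reduce_nat[of y b] algebra_simps)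
  also have "\<dots> \<le> (x choose a) * ((y - 1) choose b) + (x choose Suc a) * ((y - 1) choose (b - 1))"
    using choose_le_choose_Suc[OF assms(1)] by simp
  also have "\<dots> = (\<Sum>k\<in>{a, Suc a}. (x choose k) * ((y - 1) choose (a + b - k)))"
    by simp
  also have "\<dots> \<le> (x + (y - 1)) choose (a + b)"
    using False by (intro sum_choose_mult_le_choose_add) auto
  finally show ?thesis using assms by simp
qed

lemma central_choose_mult_le:
  fixes a b :: nat
  assumes "a + b < a * b"
  shows "((2 * a) choose a) * ((2 * b) choose b)
    \<le> 2 * ((2 * a) choose Suc a) * ((2 * b) choose Suc b)"
proof -
  have step_a: "Suc a * ((2 * a) choose Suc a) = a * ((2 * a) choose a)"
    using Suc_times_choose_Suc[of a "2 * a"] by simp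
  have step_b: "Suc b * ((2 * b) choose Suc b) = b * ((2 * b) choose b)"
    using Suc_times_choose_Suc[of b "2 * b"] by simp
  have "Suc a * Suc b * (((2 * a) choose a) * ((2 * b) choose b))
      \<le> 2 * a * b * (((2 * a) choose a) * ((2 * b) choose b))"
    using assms by (intro mult_le_mono1) (simp add: algebra_simps)
  also have "\<dots> = 2 * (Suc a * ((2 * a) choose Suc a)) * (Suc b * ((2 * b) choose Suc b))"
    unfolding step_a step_b by (simp only: ac_simps)
  also have "\<dots> = Suc a * Suc b * (2 * ((2 * a) choose Suc a) * ((2 * b) choose Suc b))"
    by (simp only: ac_simps)
  finally show ?thesis
    by (subst (asm) mult_le_cancel1) simp
qed

lemma central_choose_mult_le_choose_add_pred:
  fixes a b :: nat
  assumes "a + b < a * b"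
  shows "((2 * a) choose a) * ((2 * b) choose b) \<le> (2 * a + 2 * b - 1) choose (a + b)"
proof -
  have "a \<ge> 2" "b \<ge> 2"
    using assms by (simp_all add: add_less_mult_iff_nat)
  define n where "n = 2 * b - 1"
  define P Q R S where "P = (2 * a) choose Suc a" and "Q = (2 * a) choose a"
    and "R = n choose b" and "S = n choose Suc b"
  have left_sym: "(2 * a) choose (a - 1) = P"
    using binomial_symmetric[of "a - 1" "2 * a"] \<open>a \<ge> 2\<close> by (simp add: P_def Suc_diff_le)
  have right_sym: "n choose (b - 1) = R"
    using binomial_symmetric[of "b - 1" n] \<open>b \<ge> 2\<close> by (simp add: R_def n_def)
  have pascal_b: "(2 * b) choose b = R + R"
    using choose_reduce_nat[of "2 * b" b] \<open>b \<ge> 2\<close> right_sym by (simp add: n_def R_def)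
  moreover have "(2 * b) choose Suc b = R + S"
    using choose_reduce_nat[of "2 * b" "Suc b"] \<open>b \<ge> 2\<close> by (simp add: n_def R_def S_def)
  ultimately have "Q * R \<le> P * (R + S)"
    using central_choose_mult_le[OF assms] add_mult_distrib2 by (auto simp: P_def Q_def)
  then have "((2 * a) choose a) * ((2 * b) choose b) \<le> P * S + Q * R + P * R"
    using pascal_b by (simp add: Q_def algebra_simps)
  also have "\<dots> = (\<Sum>k\<in>{a - 1, a, Suc a}. ((2 * a) choose k) * (n choose (a + b - k)))"
  proof -
    have "a - 1 \<noteq> a" "a - 1 \<noteq> Suc a" "a + b - (a - 1) = Suc b" "a + b - Suc a = b - 1"
      using \<open>a \<ge> 2\<close> by auto
    then show ?thesis
      by (simp add: left_sym[simplified] right_sym[simplified] add.assoc flip: P_def Q_def R_def S_def)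
  qed
  also have "\<dots> \<le> (2 * a + n) choose (a + b)"
    using \<open>b \<ge> 2\<close> by (intro sum_choose_mult_le_choose_add) auto
  finally show ?thesis
    using \<open>b \<ge> 2\<close> by (simp add: n_def)
qed

theorem claim1:
  fixes x y a b :: nat
  assumes "x \<ge> 3" and "y \<ge> 3"
    and "2 * a \<le> x" and "2 * b \<le> y"
    and "\<not> (x = 4 \<and> y = 4 \<and> a = 2 \<and> b = 2)"
  shows "(x choose a) * (y choose b) \<le> (x + y - 1) choose (a + b)"
proof -
  consider "2 * a < x" | "2 * b < y" | "x = 2 * a" "y = 2 * b"
    using assms(3,4) by linarith
  then show ?thesis
  proof cases
    case 1
    then show ?thesis using assms by (intro choose_mult_choose_le_choose_add_pred) auto
  next
    case 2
    then have "(y choose b) * (x choose a) \<le> (y + x - 1) choose (b + a)"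
      using assms by (intro choose_mult_choose_le_choose_add_pred) auto
    then show ?thesis by (simp add: add.commute mult.commute)
  next
    case 3
    moreover have "a + b < a * b"
      using assms 3 by (auto simp: add_less_mult_iff_nat)
    ultimately show ?thesis using central_choose_mult_le_choose_add_pred by simp
  qed
qed

end
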